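(* Let $\widetilde{\mathbb{F}}$ be a field of characteristic $p>2$, let $q=p^\ell$ with $\ell\geq 1$, and let $f:\mathbb{F}_q\to\widetilde{\mathbb{F}}$ be an SD-map. Then $f$ is a field isomorphism of $\mathbb{F}_q$ onto a copy of $\mathbb{F}_q$ (i.e.\ a field automorphism of $\mathbb{F}_q$ up to this identification), except when $q=p=5$, in which case $f$ may alternatively be (and can only otherwise be) the map $w\mapsto w^3$, where $\mathbb{F}_5$ is identified with the prime subfield of $\widetilde{\mathbb{F}}$.
   Context: $\mathbb{F}_q$ is the finite field with $q$ elements. A map $f:\mathbb{F}\to\widetilde{\mathbb{F}}$ between fields is called an SD-map if for all $x\neq y$ in $\mathbb{F}$ one has $f(x)\neq f(y)$ and \[ f\left(\frac{x+y}{x-y}\right)=\frac{f(x)+f(y)}{f(x)-f(y)}. \] *)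

theory Defs
  imports Main "HOL-Computational_Algebra.Primes"
begin

definition SD_map :: "('a::field \<Rightarrow> 'b::field) \<Rightarrow> bool" where
  "SD_map f \<longleftrightarrow> (\<forall>x y. x \<noteq> y \<longrightarrow>
      f x \<noteq> f y \<and> f ((x + y) / (x - y)) = (f x + f y) / (f x - f y))"

definition field_hom :: "('a::field \<Rightarrow> 'b::field) \<Rightarrow> bool" where
  "field_hom f \<longleftrightarrow> f 1 = 1 \<and> (\<forall>x y. f (x + y) = f x + f y \<and> f (x * y) = f x * f y)"

end

theory Submission
  imports Defs "HOL-Number_Theory.Residues" "HOL-Computational_Algebra.Polynomial"
begin

(* Evaluating the SD equation at the pairs (x, 0), (x, -x) and (x, t x) shows that f fixes 0
   and 1, is odd and multiplicative. At the pair (1, t) it then says that f commutes with the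
   Cayley transform t |-> (1 + t) / (1 - t), hence also with the Moebius maps
   x |-> (c - x) / (1 - c x). Composing the two, for some c <> 0 with c^4 <> 1, gives an affine
   map x |-> k (gamma - x); so f (gamma - x) = f gamma - f x, and f is additive.
   If no such c exists, every nonzero element is a root of x^4 - 1, so q = 3 or q = 5. On a
   prime field an odd map is determined by its values at 0, ..., (p - 1) / 2, and for q = 5
   only f 2 = 2 or f 2 = -2 is possible; the latter case is the cube of the embedding. *)

section \<open>SD-maps in characteristic other than 2\<close>

lemma cayley_of_scaled_moebius:
  fixes a y :: "'a::field"
  assumes "a * y \<noteq> 1" "a * a \<noteq> 1"
  shows "(1 + a * ((a - y) / (1 - a * y))) / (1 - a * ((a - y) / (1 - a * y))) =
         (1 + a * a - 2 * a * y) / (1 - a * a)"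
proof -
  have "1 - a * y \<noteq> 0" "1 - a * a \<noteq> 0" using assms by simp_all
  moreover have "1 + a * ((a - y) / (1 - a * y)) = (1 + a * a - 2 * a * y) / (1 - a * y)"
    and "1 - a * ((a - y) / (1 - a * y)) = (1 - a * a) / (1 - a * y)"
    using \<open>1 - a * y \<noteq> 0\<close> by (simp_all add: field_simps)
  ultimately show ?thesis by simp
qed

locale sd_map =
  fixes f :: "'a::field \<Rightarrow> 'b::field"
  assumes SD: "SD_map f"
    and two_neq_zero_dom: "(2::'a) \<noteq> 0"
    and two_neq_zero_codom: "(2::'b) \<noteq> 0"
begin

lemma eq_iff: "f x = f y \<longleftrightarrow> x = y"
  using SD unfolding SD_map_def by blast

lemma sum_div_diff: "x \<noteq> y \<Longrightarrow> f ((x + y) / (x - y)) = (f x + f y) / (f x - f y)"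
  using SD unfolding SD_map_def by blast

lemma map_0_1: "f 0 = 0 \<and> f 1 = 1"
proof -
  have cross: "f 1 * (f x - f 0) = f x + f 0" if "x \<noteq> 0" for x
  proof -
    have "f x - f 0 \<noteq> 0" using eq_iff[of x 0] that by simp
    then show ?thesis using sum_div_diff[of x 0] that by (simp add: field_simps)
  qed
  have "(-1::'a) \<noteq> 1"
    using two_neq_zero_dom by (metis add.right_inverse one_add_one)
  then have "f 1 \<noteq> f (-1)" using eq_iff by metis
  moreover have "(f 1 - 1) * (f 1 - f (-1)) = 0"
    using cross[of 1] cross[of "-1"] by (simp add: algebra_simps)
  ultimately have f1: "f 1 = 1" by simp
  then have "2 * f 0 = 0" using cross[of 1] by (simp add: algebra_simps)
  then show ?thesis using f1 two_neq_zero_codom by simp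
qed

lemma map_0 [simp]: "f 0 = 0" and map_1 [simp]: "f 1 = 1"
  using map_0_1 by simp_all

lemma map_eq_0_iff [simp]: "f x = 0 \<longleftrightarrow> x = 0"
  using eq_iff[of x 0] by simp

lemma map_eq_1_iff [simp]: "f x = 1 \<longleftrightarrow> x = 1"
  using eq_iff[of x 1] by simp

lemma map_minus: "f (- x) = - f x"
proof (cases "x = 0")
  case False
  then have "x \<noteq> - x" using two_neq_zero_dom by (metis mult_2 neg_equal_0_iff_equal mult_eq_0_iff add.right_inverse)
  then have "(f x + f (- x)) / (f x - f (- x)) = 0" "f x - f (- x) \<noteq> 0"
    using sum_div_diff[of x "- x"] eq_iff[of x "- x"] by simp_all
  then show ?thesis by (simp add: eq_neg_iff_add_eq_0 add.commute)
qed simp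

lemma map_minus_1 [simp]: "f (- 1) = - 1"
  using map_minus[of 1] by simp

lemma map_mult: "f (t * x) = f t * f x"
proof (cases "x = 0 \<or> t = 1")
  case False
  then have x0: "x \<noteq> 0" and t1: "t \<noteq> 1" by auto
  have "(x + t * x) / (x - t * x) = (1 + t) / (1 - t)"
    using x0 t1 by (simp add: field_simps)
  then have "(f x + f (t * x)) / (f x - f (t * x)) = (1 + f t) / (1 - f t)"
    using sum_div_diff[of x "t * x"] sum_div_diff[of 1 t] x0 t1 by simp
  moreover have "f x - f (t * x) \<noteq> 0" "1 - f t \<noteq> 0"
    using eq_iff[of x "t * x"] x0 t1 by auto
  ultimately have "2 * f (t * x) = 2 * (f t * f x)"
    by (simp add: frac_eq_eq algebra_simps)
  then show ?thesis using two_neq_zero_codom by simp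
qed auto

lemma map_divide: "f (x / y) = f x / f y"
proof -
  have "f (inverse y) = inverse (f y)"
    using map_mult[of y "inverse y"] by (cases "y = 0") (simp_all add: inverse_unique)
  then show ?thesis using map_mult[of x "inverse y"] by (simp add: divide_inverse)
qed

lemma map_cayley: "t \<noteq> 1 \<Longrightarrow> f ((1 + t) / (1 - t)) = (1 + f t) / (1 - f t)"
  using sum_div_diff[of 1 t] by auto

lemma map_cayley_cross: "f (1 + t) * (1 - f t) = f (1 - t) * (1 + f t)"
proof (cases "t = 1")
  case False
  then have "f (1 + t) / f (1 - t) = (1 + f t) / (1 - f t)" "1 - f t \<noteq> 0"
    using map_cayley[of t] by (auto simp: map_divide)
  then show ?thesis using False by (simp add: frac_eq_eq algebra_simps)
qed simp

lemma map_moebius: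
  assumes "c * x \<noteq> 1"
  shows "f ((c - x) / (1 - c * x)) = (f c - f x) / (1 - f c * f x)"
proof -
  \<comment> \<open>\<open>X\<close> and \<open>Y\<close> are built from \<open>1 \<plusminus> c\<close> and \<open>1 \<plusminus> x\<close>, whose images are linked by \<open>map_cayley_cross\<close>\<close>
  define X where "X = (1 + c) * (1 - x)"
  define Y where "Y = (c - 1) * (1 + x)"
  have XY: "X + Y = 2 * (c - x)" "X - Y = 2 * (1 - c * x)"
    unfolding X_def Y_def by (simp_all add: algebra_simps)
  then have "X \<noteq> Y" using assms two_neq_zero_dom by auto
  have "(X + Y) / (X - Y) = (c - x) / (1 - c * x)"
    unfolding XY using two_neq_zero_dom by (rule mult_divide_mult_cancel_left)
  then have lhs: "f ((c - x) / (1 - c * x)) = (f X + f Y) / (f X - f Y)"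
    using sum_div_diff[OF \<open>X \<noteq> Y\<close>] by simp
  have fX: "f X = f (1 + c) * f (1 - x)" and fY: "f Y = - (f (1 - c) * f (1 + x))"
    unfolding X_def Y_def using map_mult map_minus[of "1 - c"] by simp_all
  have "(f X + f Y) * (1 - f c * f x) - (f c - f x) * (f X - f Y) =
        f (1 + c) * (1 - f c) * (f (1 - x) * (1 + f x))
      - f (1 - c) * (1 + f c) * (f (1 + x) * (1 - f x))"
    unfolding fX fY by (simp add: algebra_simps)
  also have "\<dots> = 0"
    by (simp only: map_cayley_cross) simp
  finally have "(f X + f Y) * (1 - f c * f x) = (f c - f x) * (f X - f Y)"
    by simp
  moreover have "f X - f Y \<noteq> 0" "1 - f c * f x \<noteq> 0"
    using eq_iff[of X Y] \<open>X \<noteq> Y\<close> assms by (auto simp flip: map_mult)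
  ultimately show ?thesis using lhs by (simp add: frac_eq_eq)
qed

lemma map_affine:
  assumes "c * c \<noteq> 1"
  shows "f ((1 + c * c - 2 * c * x) / (1 - c * c)) =
         (1 + f c * f c - 2 * f c * f x) / (1 - f c * f c)"
proof (cases "c * x = 1")
  case True
  then have "f c * f x = 1" by (simp flip: map_mult)
  then have "(1 + f c * f c - 2 * f c * f x) / (1 - f c * f c) = -1"
    using assms by (simp flip: map_mult add: field_simps)
  moreover have "(1 + c * c - 2 * c * x) / (1 - c * c) = -1"
    using True assms by (simp add: field_simps)
  ultimately show ?thesis by simp
next
  case False
  define w where "w = (c - x) / (1 - c * x)"
  have cw: "c * w \<noteq> 1"
  proof
    assume "c * w = 1"
    then have "c * (c - x) = 1 - c * x" unfolding w_def using False by (simp add: field_simps)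
    then show False using assms by (simp add: algebra_simps)
  qed
  have "f c * f x \<noteq> 1" "f c * f c \<noteq> 1"
    using False assms by (simp_all flip: map_mult)
  have "f ((1 + c * w) / (1 - c * w)) = (1 + f c * f w) / (1 - f c * f w)"
    using map_cayley[OF cw] by (simp only: map_mult)
  also have "f w = (f c - f x) / (1 - f c * f x)"
    unfolding w_def using False by (rule map_moebius)
  also have "(1 + f c * ((f c - f x) / (1 - f c * f x))) / (1 - f c * ((f c - f x) / (1 - f c * f x)))
      = (1 + f c * f c - 2 * f c * f x) / (1 - f c * f c)"
    using \<open>f c * f x \<noteq> 1\<close> \<open>f c * f c \<noteq> 1\<close> by (rule cayley_of_scaled_moebius)
  also have "(1 + c * w) / (1 - c * w) = (1 + c * c - 2 * c * x) / (1 - c * c)"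
    unfolding w_def using False assms by (rule cayley_of_scaled_moebius)
  finally show ?thesis .
qed

text \<open>
  For \<open>c \<noteq> 0\<close> with \<open>c\<^sup>2 \<noteq> \<plusminus>1\<close>, the argument in \<open>map_affine\<close> is \<open>k * (\<gamma> - x)\<close> with
  \<open>\<gamma> = (1 + c\<^sup>2) / (2 c)\<close>, \<open>k = 2 c / (1 - c\<^sup>2)\<close>; comparing the values at \<open>x = 0\<close> and
  \<open>x = \<gamma>\<close> shows that \<open>f\<close> commutes with the reflection \<open>x \<mapsto> \<gamma> - x\<close>.\<close>

lemma exists_reflection:
  fixes c :: 'a
  assumes "c \<noteq> 0" "c * c \<noteq> 1" "c * c \<noteq> -1"
  obtains \<gamma> where "\<gamma> \<noteq> 0" "\<And>x. f (\<gamma> - x) = f \<gamma> - f x"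
proof -
  define \<gamma> where "\<gamma> = (1 + c * c) / (2 * c)"
  define k where "k = 2 * c / (1 - c * c)"
  define D where "D = 1 - f c * f c"
  have "D \<noteq> 0" "2 * f c \<noteq> 0"
    unfolding D_def using assms two_neq_zero_codom by (simp_all flip: map_mult)
  have "\<gamma> \<noteq> 0"
    unfolding \<gamma>_def using assms two_neq_zero_dom by (simp add: add_eq_0_iff)
  have "(1 + c * c - 2 * c * x) / (1 - c * c) = k * (\<gamma> - x)" for x
    unfolding k_def \<gamma>_def using assms two_neq_zero_dom by (simp add: field_simps)
  then have affine: "f k * f (\<gamma> - x) = (1 + f c * f c - 2 * f c * f x) / D" for x
    using map_affine[OF assms(2), of x] by (simp add: map_mult D_def)
  have "1 + f c * f c = 2 * f c * f \<gamma>"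
    using affine[of \<gamma>] \<open>D \<noteq> 0\<close> by simp
  then have scaled: "f k * f (\<gamma> - x) = 2 * f c * (f \<gamma> - f x) / D" for x
    using affine[of x] by (simp add: algebra_simps)
  have "f k * f \<gamma> = 2 * f c / D * f \<gamma>"
    using scaled[of 0] by simp
  then have "f k = 2 * f c / D"
    using \<open>\<gamma> \<noteq> 0\<close> mult_right_cancel map_eq_0_iff by metis
  then have "2 * f c / D * f (\<gamma> - x) = 2 * f c / D * (f \<gamma> - f x)" for x
    using scaled[of x] by simp
  then have "f (\<gamma> - x) = f \<gamma> - f x" for x
    using \<open>D \<noteq> 0\<close> \<open>2 * f c \<noteq> 0\<close> by simp
  with \<open>\<gamma> \<noteq> 0\<close> show thesis by (rule that)
qed

lemma map_add:
  fixes c :: 'a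
  assumes "c \<noteq> 0" "c * c \<noteq> 1" "c * c \<noteq> -1"
  shows "f (x + y) = f x + f y"
proof (cases "y = 0")
  case False
  obtain \<gamma> where "\<gamma> \<noteq> 0" and reflect: "\<And>x. f (\<gamma> - x) = f \<gamma> - f x"
    using exists_reflection[OF assms] by blast
  define z where "z = y / \<gamma>"
  have "z \<noteq> 0" unfolding z_def using False \<open>\<gamma> \<noteq> 0\<close> by simp
  have "x + y = z * (\<gamma> - (- (x / z)))"
    unfolding z_def using \<open>\<gamma> \<noteq> 0\<close> False by (simp add: field_simps)
  then have "f (x + y) = f z * f (\<gamma> - (- (x / z)))"
    by (simp only: map_mult)
  also have "\<dots> = f z * (f \<gamma> - f (- (x / z)))"
    by (simp only: reflect)
  also have "\<dots> = f (z * \<gamma>) + f (z * (x / z))"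
    by (simp only: map_minus map_mult) (simp add: algebra_simps)
  also have "z * \<gamma> = y"
    using \<open>\<gamma> \<noteq> 0\<close> by (simp add: z_def)
  also have "z * (x / z) = x"
    using \<open>z \<noteq> 0\<close> by simp
  finally show ?thesis by simp
qed simp

lemma field_hom_if_not_fourth_root:
  fixes c :: 'a
  assumes "c \<noteq> 0" "c ^ 4 \<noteq> 1"
  shows "field_hom f"
proof -
  have "c * c \<noteq> 1" "c * c \<noteq> -1"
    using assms(2) by (auto simp: power4_eq_xxxx)
  then show ?thesis
    unfolding field_hom_def using map_add[OF assms(1)] map_mult by simp
qed

end

section \<open>Small finite fields and prime fields\<close>

lemma CHAR_eq_if_card_prime_power:
  assumes "prime p" "l \<ge> 1" "card (UNIV :: 'a::{field,finite} set) = p ^ l"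
  shows "CHAR('a) = p"
proof -
  have "prime CHAR('a)"
    by (simp add: finite_imp_CHAR_pos prime_CHAR_semidom)
  moreover have "CHAR('a) dvd p ^ l"
    using CHAR_dvd_CARD[where 'a='a] assms(3) by simp
  ultimately show ?thesis
    using assms(1) by (metis prime_dvd_power primes_dvd_imp_eq)
qed

lemma two_neq_zero_if_CHAR_gt_2: "CHAR('a::semiring_1) > 2 \<Longrightarrow> (2::'a) \<noteq> 0"
  by (metis of_nat_numeral of_nat_eq_0_iff_char_dvd dvd_imp_le zero_less_numeral not_le)

lemma odd_prime_power_le_5:
  fixes p l :: nat
  assumes "prime p" "p > 2" "l \<ge> 1" "p ^ l \<le> 5"
  shows "l = 1" "p = 3 \<or> p = 5"
proof -
  show "l = 1"
  proof (rule ccontr)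
    assume "l \<noteq> 1"
    then have "p ^ 2 \<le> p ^ l"
      using assms(2,3) by (intro power_increasing) auto
    moreover have "3 ^ 2 \<le> p ^ 2"
      using assms(2) by (intro power_mono) auto
    ultimately show False
      using assms(4) by simp
  qed
  then have "p \<le> 5"
    using assms(4) by simp
  then show "p = 3 \<or> p = 5"
    using prime_odd_nat[OF assms(1,2)] assms(2) by presburger
qed

lemma card_roots_of_unity_le:
  assumes "n > 0"
  shows "card {x::'a::idom. x ^ n = 1} \<le> n"
proof -
  let ?p = "monom (1::'a) n + [:-1:]"
  have "degree ?p = n"
    using assms by (simp add: degree_add_eq_left degree_monom_eq)
  moreover have "?p \<noteq> 0"
    using assms \<open>degree ?p = n\<close> by (metis degree_0 less_irrefl)
  moreover have "{x. x ^ n = 1} = {x. poly ?p x = 0}"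
    by (simp add: poly_monom)
  ultimately show ?thesis
    using card_poly_roots_bound[of ?p] by simp
qed

lemma card_UNIV_le_5_if_fourth_roots:
  assumes "\<And>c::'a::{idom,finite}. c \<noteq> 0 \<Longrightarrow> c ^ 4 = 1"
  shows "card (UNIV :: 'a set) \<le> 5"
proof -
  have "UNIV = insert 0 {x::'a. x ^ 4 = 1}"
    using assms by blast
  then have "card (UNIV :: 'a set) = card (insert 0 {x::'a. x ^ 4 = 1})"
    by (rule arg_cong)
  also have "\<dots> \<le> Suc (card {x::'a. x ^ 4 = 1})"
    by (simp add: card_insert_if)
  also have "\<dots> \<le> 5"
    using card_roots_of_unity_le[of 4] by simp
  finally show ?thesis .
qed

lemma of_nat_image_lessThan_CHAR:
  assumes "card (UNIV :: 'a::{ring_1,finite} set) = CHAR('a)"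
  shows "of_nat ` {..<CHAR('a)} = (UNIV :: 'a set)"
proof -
  have "inj_on (of_nat :: nat \<Rightarrow> 'a) {..<CHAR('a)}"
    by (rule inj_onI) (simp add: of_nat_eq_iff_cong_CHAR cong_def)
  then have "card (of_nat ` {..<CHAR('a)} :: 'a set) = card (UNIV :: 'a set)"
    using assms by (simp add: card_image)
  then show ?thesis
    by (simp add: card_subset_eq)
qed

lemma prime_field_elem_cases:
  fixes x :: "'a::{ring_1,finite}"
  assumes "card (UNIV :: 'a set) = CHAR('a)"
  obtains n where "2 * n \<le> CHAR('a)" "x = of_nat n \<or> x = - of_nat n"
proof -
  obtain n where n: "n < CHAR('a)" "x = of_nat n"
    using of_nat_image_lessThan_CHAR[OF assms] by (metis UNIV_I imageE lessThan_iff)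
  show thesis
  proof (cases "2 * n \<le> CHAR('a)")
    case False
    have "x = - of_nat (CHAR('a) - n)"
      using n by (simp add: of_nat_diff)
    then show thesis
      using that[of "CHAR('a) - n"] False by simp
  qed (use n that in blast)
qed

lemma odd_maps_eq_on_prime_field:
  fixes g h :: "'a::{ring_1,finite} \<Rightarrow> 'b::group_add"
  assumes "card (UNIV :: 'a set) = CHAR('a)"
    and "\<And>x. g (- x) = - g x" "\<And>x. h (- x) = - h x"
    and "\<And>n. 2 * n \<le> CHAR('a) \<Longrightarrow> g (of_nat n) = h (of_nat n)"
  shows "g x = h x"
  by (rule prime_field_elem_cases[OF assms(1), of x]) (use assms in auto)

lemma field_hom_on_prime_fieldI:
  fixes g :: "'a::{field,finite} \<Rightarrow> 'b::field"
  assumes card: "card (UNIV :: 'a set) = CHAR('a)" and "CHAR('b) = CHAR('a)"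
    and odd: "\<And>x. g (- x) = - g x"
    and small: "\<And>n. 2 * n \<le> CHAR('a) \<Longrightarrow> g (of_nat n) = of_nat n"
  shows "field_hom g"
proof -
  have same_relations: "(of_nat n :: 'a) = of_nat m \<longleftrightarrow> (of_nat n :: 'b) = of_nat m"
    "(of_nat n :: 'a) = - of_nat m \<longleftrightarrow> (of_nat n :: 'b) = - of_nat m" for n m
    using \<open>CHAR('b) = CHAR('a)\<close>
    by (simp_all add: of_nat_eq_iff_cong_CHAR eq_neg_iff_add_eq_0 of_nat_eq_0_iff_char_dvd
        flip: of_nat_add)
  have fixes_of_nat: "g (of_nat n) = of_nat n" for n
  proof (rule prime_field_elem_cases[OF card, of "of_nat n"])
    fix m
    assume "2 * m \<le> CHAR('a)" "(of_nat n :: 'a) = of_nat m \<or> (of_nat n :: 'a) = - of_nat m"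
    then consider "(of_nat n :: 'a) = of_nat m" | "(of_nat n :: 'a) = - of_nat m"
      by blast
    then show ?thesis
    proof cases
      case 1
      then have "g (of_nat n) = of_nat m"
        using small[of m] \<open>2 * m \<le> CHAR('a)\<close> by simp
      also have "(of_nat m :: 'b) = of_nat n"
        using 1 same_relations(1) by metis
      finally show ?thesis .
    next
      case 2
      then have "g (of_nat n) = - of_nat m"
        using small[of m] \<open>2 * m \<le> CHAR('a)\<close> odd by simp
      also have "- (of_nat m :: 'b) = of_nat n"
        using 2 same_relations(2) by metis
      finally show ?thesis .
    qed
  qed
  show ?thesis
    unfolding field_hom_def
  proof (intro conjI allI)
    fix x y :: 'a
    obtain m n where "x = of_nat m" "y = of_nat n"
      using of_nat_image_lessThan_CHAR[OF card] by (metis UNIV_I imageE)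
    then show "g (x + y) = g x + g y" "g (x * y) = g x * g y"
      by (simp_all add: fixes_of_nat flip: of_nat_add of_nat_mult)
  qed (use fixes_of_nat[of 1] in simp)
qed

lemma sd_map_card_3_field_hom:
  fixes f :: "'a::{field,finite} \<Rightarrow> 'b::field"
  assumes "sd_map f" "card (UNIV :: 'a set) = 3" "CHAR('a) = 3" "CHAR('b) = 3"
  shows "field_hom f"
proof -
  interpret sd_map f by fact
  have "f (of_nat n) = of_nat n" if "2 * n \<le> 3" for n
  proof -
    have "n = 0 \<or> n = 1" using that by arith
    then show ?thesis by auto
  qed
  then show ?thesis
    using assms by (intro field_hom_on_prime_fieldI) (simp_all add: map_minus)
qed

text \<open>
  If \<open>f 2 = -2\<close>, then \<open>w \<mapsto> f w ^ 3\<close> fixes \<open>2\<close> and hence is the embedding; cubing it once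
  more gives back \<open>f\<close> because \<open>2 ^ 3 = -2\<close> in characteristic 5.\<close>

lemma sd_map_card_5_cases:
  fixes f :: "'a::{field,finite} \<Rightarrow> 'b::field"
  assumes "sd_map f" "card (UNIV :: 'a set) = 5" "CHAR('a) = 5" "CHAR('b) = 5"
  shows "field_hom f \<or> (\<exists>g::'a \<Rightarrow> 'b. field_hom g \<and> (\<forall>w. f w = g w ^ 3))"
proof -
  interpret sd_map f by fact
  have five_a: "(5::'a) = 0" and five_b: "(5::'b) = 0"
    using of_nat_CHAR[where 'a='a] of_nat_CHAR[where 'a='b] assms(3,4) by simp_all
  have "(2::'a) * 2 = - 1"
    using five_a by (simp add: eq_neg_iff_add_eq_0)
  then have "f 2 * f 2 = - 1"
    by (metis map_mult map_minus_1)
  then have "(f 2 - 2) * (f 2 + 2) = 0"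
    using five_b by (simp add: algebra_simps)
  then consider "f 2 = 2" | "f 2 = -2"
    by (auto simp: eq_neg_iff_add_eq_0)
  then show ?thesis
  proof cases
    case 1
    have "f (of_nat n) = of_nat n" if "2 * n \<le> 5" for n
    proof -
      have "n = 0 \<or> n = 1 \<or> n = 2" using that by arith
      then show ?thesis using 1 by auto
    qed
    then show ?thesis
      using assms by (simp add: field_hom_on_prime_fieldI map_minus)
  next
    case 2
    define g where "g w = f w ^ 3" for w
    have g_minus: "g (- x) = - g x" for x
      by (simp add: g_def map_minus)
    have "(- 2 :: 'b) ^ 3 = 2 - 2 * 5"
      by simp
    then have "g 2 = 2"
      using 2 five_b by (simp add: g_def)
    then have g_small: "g (of_nat n) = of_nat n" if "2 * n \<le> 5" for n
    proof -
      have "n = 0 \<or> n = 1 \<or> n = 2" using that by arith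
      then show ?thesis using \<open>g 2 = 2\<close> by (auto simp: g_def)
    qed
    have "field_hom g"
      using assms g_minus g_small by (intro field_hom_on_prime_fieldI) simp_all
    moreover have "f w = g w ^ 3" for w
    proof (rule odd_maps_eq_on_prime_field[where h = "\<lambda>w. g w ^ 3"])
      fix n :: nat
      assume "2 * n \<le> CHAR('a)"
      then have "n = 0 \<or> n = 1 \<or> n = 2"
        using assms(3) by arith
      moreover have "(2::'b) ^ 3 = 2 * 5 - 2"
        by simp
      then have "(2::'b) ^ 3 = - 2"
        using five_b by simp
      ultimately show "f (of_nat n) = g (of_nat n) ^ 3"
        using g_small[of n] 2 by auto
    qed (use assms g_minus map_minus in simp_all)
    ultimately show ?thesis by blast
  qed
qed

theorem proposition3p2:
  fixes f :: "'a::{field,finite} \<Rightarrow> 'b::field" and p l :: nat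
  assumes "prime p" and "p > 2" and "CHAR('b) = p"
    and "l \<ge> 1" and "card (UNIV :: 'a set) = p ^ l"
    and "SD_map f"
  shows "field_hom f \<or>
         (card (UNIV :: 'a set) = 5 \<and> (\<exists>g::'a \<Rightarrow> 'b. field_hom g \<and> (\<forall>w. f w = g w ^ 3)))"
proof -
  have char_a: "CHAR('a) = p"
    using assms(1,4,5) by (rule CHAR_eq_if_card_prime_power)
  have sd: "sd_map f"
    using assms(2,3,6) char_a by unfold_locales (simp_all add: two_neq_zero_if_CHAR_gt_2)
  show ?thesis
  proof (cases "\<exists>c::'a. c \<noteq> 0 \<and> c ^ 4 \<noteq> 1")
    case True
    then show ?thesis
      using sd_map.field_hom_if_not_fourth_root[OF sd] by blast
  next
    case False
    then have "p ^ l \<le> 5"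
      using card_UNIV_le_5_if_fourth_roots[where 'a='a] assms(5) by auto
    then have "l = 1" "p = 3 \<or> p = 5"
      using odd_prime_power_le_5 assms(1,2,4) by blast+
    then show ?thesis
      using sd_map_card_3_field_hom[OF sd] sd_map_card_5_cases[OF sd] assms(3,5) char_a by auto
  qed
qed

end
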